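(* Let $G$ be a finite solvable group with commutator subgroup $G'$, and let $X$ be a finite undirected graph. If $G$ is representable on $X$, then $|G/G'|$ and $|\mathrm{Aut}(X)|$ have a common prime factor.
   Context: $G'$ is the subgroup of $G$ generated by all commutators $[x,y]=xyx^{-1}y^{-1}$. $\mathrm{Aut}(X)$ is the automorphism group of $X$. $G$ is representable on $X$ if there is a nontrivial homomorphism $G\to\mathrm{Aut}(X)$. *)

theory Defs
  imports "HOL-Algebra.Algebra"
begin

definition undirected_graph :: "'v set \<Rightarrow> ('v \<Rightarrow> 'v \<Rightarrow> bool) \<Rightarrow> bool" where
  "undirected_graph V E \<longleftrightarrow>
     (\<forall>x y. E x y \<longrightarrow> x \<in> V \<and> y \<in> V) \<and>
     (\<forall>x y. E x y \<longrightarrow> E y x) \<and>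
     (\<forall>x. \<not> E x x)"

definition graph_aut_group :: "'v set \<Rightarrow> ('v \<Rightarrow> 'v \<Rightarrow> bool) \<Rightarrow> ('v \<Rightarrow> 'v) monoid" where
  "graph_aut_group V E = (BijGroup V)\<lparr>carrier :=
     {f \<in> Bij V. \<forall>x\<in>V. \<forall>y\<in>V. E (f x) (f y) \<longleftrightarrow> E x y}\<rparr>"

definition representable_on :: "('a, 'c) monoid_scheme \<Rightarrow> ('b, 'd) monoid_scheme \<Rightarrow> bool" where
  "representable_on G H \<longleftrightarrow>
     (\<exists>h. h \<in> hom G H \<and> (\<exists>g \<in> carrier G. h g \<noteq> \<one>\<^bsub>H\<^esub>))"

end

theory Submission
  imports Defs
begin

text \<open>The image \<open>K = h(G)\<close> of a nontrivial homomorphism \<open>h : G \<rightarrow> Aut(X)\<close> is a nontrivial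
  solvable group, so its derived subgroup \<open>K' = h(G')\<close> is proper. The index \<open>[K : K']\<close> divides
  \<open>|K|\<close>, hence \<open>|Aut(X)|\<close>, and it also divides \<open>[G : G']\<close>: for any subgroup \<open>A\<close> of \<open>G\<close>,
  \<open>[h(G) : h(A)]\<close> is the index of the preimage of \<open>h(A)\<close>, a subgroup containing \<open>A\<close>.
  Any prime factor of \<open>[K : K']\<close> is therefore common to both numbers. Only the group
  structure of \<open>Aut(X)\<close> is used, not the graph axioms or the finiteness of \<open>X\<close>.\<close>

lemma graph_aut_subgroup_BijGroup:
  "subgroup (carrier (graph_aut_group V E)) (BijGroup V)"
proof (rule subgroup.intro)
  show "carrier (graph_aut_group V E) \<subseteq> carrier (BijGroup V)"
    by (auto simp: graph_aut_group_def BijGroup_def)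
next
  fix f g assume "f \<in> carrier (graph_aut_group V E)" "g \<in> carrier (graph_aut_group V E)"
  then have f: "f \<in> Bij V" "\<forall>x\<in>V. \<forall>y\<in>V. E (f x) (f y) \<longleftrightarrow> E x y"
    and g: "g \<in> Bij V" "\<forall>x\<in>V. \<forall>y\<in>V. E (g x) (g y) \<longleftrightarrow> E x y"
    by (simp_all add: graph_aut_group_def)
  have "\<forall>x\<in>V. \<forall>y\<in>V. E (compose V f g x) (compose V f g y) \<longleftrightarrow> E x y"
    using f(2) g(2) Bij_imp_funcset[OF g(1)] by (simp add: compose_def Pi_iff)
  then show "f \<otimes>\<^bsub>BijGroup V\<^esub> g \<in> carrier (graph_aut_group V E)"
    using f(1) g(1) by (simp add: graph_aut_group_def BijGroup_def compose_Bij)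
next
  show "\<one>\<^bsub>BijGroup V\<^esub> \<in> carrier (graph_aut_group V E)"
    by (simp add: graph_aut_group_def BijGroup_def id_Bij)
next
  fix f assume f: "f \<in> carrier (graph_aut_group V E)"
  then have bij: "bij_betw f V V" and hom: "\<forall>x\<in>V. \<forall>y\<in>V. E (f x) (f y) \<longleftrightarrow> E x y"
    by (auto simp: graph_aut_group_def Bij_def)
  have "E (inv_into V f x) (inv_into V f y) \<longleftrightarrow> E x y" if "x \<in> V" "y \<in> V" for x y
  proof -
    have "inv_into V f x \<in> V" "inv_into V f y \<in> V"
      using bij_betwE[OF bij_betw_inv_into[OF bij]] that by auto
    then have "E (inv_into V f x) (inv_into V f y) \<longleftrightarrow>
        E (f (inv_into V f x)) (f (inv_into V f y))"
      using hom by simp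
    then show ?thesis
      using bij_betw_inv_into_right[OF bij] that by simp
  qed
  then show "inv\<^bsub>BijGroup V\<^esub> f \<in> carrier (graph_aut_group V E)"
    using f by (simp add: graph_aut_group_def inv_BijGroup restrict_inv_into_Bij)
qed

lemma group_graph_aut_group: "group (graph_aut_group V E)"
  using group.subgroup_imp_group[OF group_BijGroup graph_aut_subgroup_BijGroup]
  by (simp add: graph_aut_group_def)

lemma (in group_hom) card_image_mult_card_kernel:
  "card (h ` carrier G) * card (kernel G H h) = order G"
proof -
  let ?I = "H\<lparr>carrier := h ` carrier G\<rparr>"
  have "group ?I"
    using subgroup_img_is_subgroup[OF G.subgroup_self] H.subgroup_imp_group by blast
  then have "group_hom G ?I h"
    by (auto simp: group_hom_def group_hom_axioms_def hom_def)
  then have "G Mod kernel G ?I h \<cong> ?I"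
    by (rule group_hom.FactGroup_iso) simp
  moreover have "kernel G ?I h = kernel G H h"
    by (simp add: kernel_def)
  ultimately have "card (rcosets (kernel G H h)) = card (h ` carrier G)"
    using iso_same_card by (fastforce simp: FactGroup_def RCOSETS_def)
  then show ?thesis
    using G.lagrange[OF subgroup_kernel] by simp
qed

lemma (in group_hom) subgroup_vimage:
  assumes "subgroup J H"
  shows "subgroup (carrier G \<inter> h -` J) G"
  using subgroup.m_closed[OF assms] subgroup.one_closed[OF assms] subgroup.m_inv_closed[OF assms]
  by (auto intro!: subgroup.intro)

lemma (in group_hom) index_image_dvd_index:
  assumes fin: "finite (carrier G)" and A: "subgroup A G"
  obtains q where "card (h ` carrier G) = q * card (h ` A)" and "q dvd card (rcosets A)"
proof -
  define M where "M = carrier G \<inter> h -` (h ` A)"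
  have hA: "subgroup (h ` A) H"
    using subgroup_img_is_subgroup[OF A] .
  have M: "subgroup M G"
    unfolding M_def using subgroup_vimage[OF hA] .
  have AM: "A \<subseteq> M"
    unfolding M_def using subgroup.subset[OF A] by auto
  have hM: "h ` M = h ` A"
    using AM unfolding M_def by auto
  have "group_hom (G\<lparr>carrier := M\<rparr>) H h"
    using G.subgroup_imp_group[OF M] subgroup.subset[OF M]
    by (auto simp: group_hom_def group_hom_axioms_def hom_def intro!: hom_mult)
  moreover have "kernel (G\<lparr>carrier := M\<rparr>) H h = kernel G H h"
    unfolding kernel_def M_def using subgroup.one_closed[OF hA] by auto
  ultimately have cardM: "card (h ` A) * card (kernel G H h) = card M"
    using group_hom.card_image_mult_card_kernel hM by (fastforce simp: order_def)
  define q where "q = card (rcosets M)"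
  have "card (h ` carrier G) * card (kernel G H h) = q * card (h ` A) * card (kernel G H h)"
    using card_image_mult_card_kernel G.lagrange[OF M] cardM by (simp add: q_def mult.assoc)
  moreover have "card (kernel G H h) > 0"
    using fin subgroup.one_closed[OF subgroup_kernel] subgroup.subset[OF subgroup_kernel]
    by (metis card_gt_0_iff empty_iff finite_subset)
  ultimately have card_image: "card (h ` carrier G) = q * card (h ` A)"
    by simp
  have index: "card (rcosets A) = q * card (rcosets\<^bsub>G\<lparr>carrier := M\<rparr>\<^esub> A)"
  proof -
    have "card (rcosets A) * card A = q * card (rcosets\<^bsub>G\<lparr>carrier := M\<rparr>\<^esub> A) * card A"
      using G.lagrange[OF A] G.lagrange[OF M] group.lagrange[OF G.subgroup_imp_group[OF M]
          G.subgroup_incl[OF A M AM]]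
      by (simp add: q_def order_def mult.assoc)
    moreover have "card A > 0"
      using fin subgroup.one_closed[OF A] subgroup.subset[OF A]
      by (metis card_gt_0_iff empty_iff finite_subset)
    ultimately show ?thesis by simp
  qed
  show ?thesis
    by (rule that[OF card_image]) (simp add: index)
qed

lemma (in group) derived_ne_of_solvable_seq:
  assumes "solvable_seq G K" and "K \<noteq> {\<one>}"
  shows "derived G K \<noteq> K"
proof
  assume "derived G K = K"
  then have "(derived G ^^ n) K = K" for n
    by (induction n) simp_all
  moreover obtain n where "(derived G ^^ n) K = {\<one>}"
    using solvable_imp_trivial_derived_seq[OF assms(1)] by blast
  ultimately show False
    using assms(2) by simp
qed

theorem mainTheorem5:
  fixes G :: "('a, 'c) monoid_scheme"
    and V :: "'v set" and E :: "'v \<Rightarrow> 'v \<Rightarrow> bool"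
  assumes "group G" and "finite (carrier G)" and "solvable G"
    and "finite V" and "undirected_graph V E"
    and "representable_on G (graph_aut_group V E)"
  shows "\<exists>p::nat. Factorial_Ring.prime p
           \<and> p dvd order (G Mod (derived G (carrier G)))
           \<and> p dvd order (graph_aut_group V E)"
proof -
  let ?A = "graph_aut_group V E"
  let ?D = "derived G (carrier G)"
  obtain h g where h: "h \<in> hom G ?A" and g: "g \<in> carrier G" "h g \<noteq> \<one>\<^bsub>?A\<^esub>"
    using assms(6) unfolding representable_on_def by blast
  interpret group_hom G ?A h
    using assms(1) group_graph_aut_group h by (simp add: group_hom_def group_hom_axioms_def)
  have image_nontrivial: "h ` carrier G \<noteq> {\<one>\<^bsub>?A\<^esub>}"
    using g by blast
  have "h ` ?D \<noteq> h ` carrier G"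
    using H.derived_ne_of_solvable_seq[OF solvable_imp_solvable_img image_nontrivial]
      assms(3) derived_img[of "carrier G"] by (simp add: solvable_def)
  then have "card (h ` ?D) < card (h ` carrier G)"
    using subgroup.subset[OF G.derived_is_subgroup] assms(2)
    by (intro psubset_card_mono) auto
  obtain q where q: "card (h ` carrier G) = q * card (h ` ?D)" "q dvd card (rcosets\<^bsub>G\<^esub> ?D)"
    using index_image_dvd_index[OF assms(2) G.derived_is_subgroup] by blast
  with \<open>card (h ` ?D) < card (h ` carrier G)\<close> have "q \<noteq> 1"
    by auto
  then obtain p :: nat where p: "Factorial_Ring.prime p" "p dvd q"
    using prime_factor_nat by blast
  have "p dvd order (G Mod ?D)"
    using p(2) q(2) by (auto simp: order_def FactGroup_def RCOSETS_def intro: dvd_trans)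
  moreover have "p dvd order ?A"
  proof (rule dvd_trans)
    show "p dvd card (h ` carrier G)"
      using p(2) q(1) by simp
    show "card (h ` carrier G) dvd order ?A"
      using H.lagrange[OF img_is_subgroup] by (metis dvd_triv_right)
  qed
  ultimately show ?thesis
    using p(1) by blast
qed

end
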